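(* Let $n$ be a positive integer, let $p\ge q$ be positive integers, and let $B$ be a $p\times q$ matrix with nonnegative real entries. For each positive divisor $k$ of $n$, let $F_k$ be the symmetric block matrix of size $kq+\frac{n}{k}p$ whose block rows and columns have sizes, in order, $p$, then $q$ repeated $k$ times, then $p$ repeated $\frac{n}{k}-1$ times; the block in a size-$p$ block row and a size-$q$ block column is $B$, the block in a size-$q$ block row and a size-$p$ block column is $B^T$, and all other blocks are zero. Then the normalized Laplacians $L\big(F_k\oplus 0_{(n-\frac{n}{k})p+(1-k)q}\big)$, as $k$ ranges over all positive divisors of $n$, are pairwise cospectral.
   Context: For matrices $X,Y$, $X\oplus Y=\begin{bmatrix} X&0\\0&Y\end{bmatrix}$; $0_m$ is the $m\times m$ zero matrix. For a nonnegative real symmetric matrix $M$ with positive row sums, its normalized Laplacian is $L(M)=I-\Delta^{-1/2}M\Delta^{-1/2}$, where $\Delta$ is the diagonal matrix of row sums of $M$. If $M$ has zero row sums, write (after a simultaneous permutation of rows and columns) $M=M_1\oplus 0_k$ where $M_1$ has positive row sums; then $L(M)=L(M_1)\oplus I_k$. Two square matrices are cospectral if they have the same eigenvalues with the same multiplicities. *)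

theory Defs
  imports "Jordan_Normal_Form.Char_Poly"
begin

definition row_sum :: "real mat \<Rightarrow> nat \<Rightarrow> real" where
  "row_sum M i = (\<Sum>j<dim_col M. M $$ (i, j))"

text \<open>Normalized Laplacian L(M) = I - D M D with D = diag(1/sqrt(d_i)), where
  1/sqrt 0 is read as 0 (Isabelle's inverse 0 = 0).  For rows with zero row sum
  this gives the entries of the identity, i.e. it is exactly L(M_1) + I_k up to
  the simultaneous permutation used in the paper's convention.\<close>
definition norm_laplacian :: "real mat \<Rightarrow> real mat" where
  "norm_laplacian M = mat (dim_row M) (dim_row M)
     (\<lambda>(i, j). (if i = j then 1 else 0)
        - inverse (sqrt (row_sum M i)) * M $$ (i, j) * inverse (sqrt (row_sum M j)))"

definition cospectral :: "real mat \<Rightarrow> real mat \<Rightarrow> bool" where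
  "cospectral A C \<longleftrightarrow> A \<in> carrier_mat (dim_row A) (dim_row A)
     \<and> C \<in> carrier_mat (dim_row A) (dim_row A)
     \<and> (\<forall>z::complex. order z (char_poly (map_mat complex_of_real A))
                   = order z (char_poly (map_mat complex_of_real C)))"

text \<open>Classification of an index of F_k: block sizes p, then q (k times), then p
  (n/k - 1 times).  Inl a = local row a of a size-p block, Inr b = local index b of
  a size-q block.\<close>
definition F_idx :: "nat \<Rightarrow> nat \<Rightarrow> nat \<Rightarrow> nat \<Rightarrow> nat + nat" where
  "F_idx p q k i = (if i < p then Inl i
                    else if i < p + k * q then Inr ((i - p) mod q)
                    else Inl ((i - p - k * q) mod p))"

definition F_mat :: "nat \<Rightarrow> nat \<Rightarrow> nat \<Rightarrow> real mat \<Rightarrow> nat \<Rightarrow> real mat" where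
  "F_mat n p q B k = mat (k * q + (n div k) * p) (k * q + (n div k) * p)
     (\<lambda>(i, j). case (F_idx p q k i, F_idx p q k j) of
         (Inl a, Inr b) \<Rightarrow> B $$ (a, b)
       | (Inr b, Inl a) \<Rightarrow> B $$ (a, b)
       | _ \<Rightarrow> 0)"

text \<open>F_k \<oplus> 0_m with m = (n - n/k) p + (1 - k) q (nonnegative since p \<ge> q).\<close>
definition F_pad :: "nat \<Rightarrow> nat \<Rightarrow> nat \<Rightarrow> real mat \<Rightarrow> nat \<Rightarrow> real mat" where
  "F_pad n p q B k = (let N = k * q + (n div k) * p;
                          m = (n - n div k) * p + q - k * q
                      in four_block_mat (F_mat n p q B k) (0\<^sub>m N m) (0\<^sub>m m N) (0\<^sub>m m m))"

end

theory Submission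
  imports Defs
begin

text \<open>Outside the padding, every index of F_k + 0 is a copy of a vertex of the bipartite matrix
  M = [0 B; B^T 0]: each row of B is copied n/k times and each column k times.  Hence the
  normalized adjacency matrix D^(-1/2) (F_k + 0) D^(-1/2) factors as P A P^T, where A is the
  normalized adjacency matrix of M and the (np+q) x (p+q) matrix P, with entries (n/k)^(-1/2) and
  k^(-1/2), has orthonormal columns.  By Sylvester's determinant identity, (x - 1)^(p+q) times the
  characteristic polynomial of I - P A P^T equals (x - 1)^(np+q) times that of I - A P^T P = L(M),
  which does not depend on k.\<close>

lemma sum_lessThan_add:
  fixes f :: "nat \<Rightarrow> 'a::comm_monoid_add"
  shows "(\<Sum>i<a + b. f i) = (\<Sum>i<a. f i) + (\<Sum>i<b. f (a + i))"
  by (induction b) (auto simp: add.assoc)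

lemma sum_lessThan_mult_mod:
  fixes g :: "nat \<Rightarrow> 'a::comm_semiring_1"
  shows "(\<Sum>i<t * q. g (i mod q)) = of_nat t * (\<Sum>b<q. g b)"
proof (induction t)
  case (Suc t)
  have "(\<Sum>i<Suc t * q. g (i mod q)) = (\<Sum>i<t * q. g (i mod q)) + (\<Sum>i<q. g ((t * q + i) mod q))"
    by (simp add: add.commute sum_lessThan_add)
  also have "(\<Sum>i<q. g ((t * q + i) mod q)) = (\<Sum>b<q. g b)"
    by (rule sum.cong) auto
  finally show ?case using Suc by (simp add: algebra_simps)
qed simp

lemma det_sylvester:
  fixes c :: "'a::idom"
  assumes P: "P \<in> carrier_mat N r" and R: "R \<in> carrier_mat r N"
  shows "c ^ r * det (c \<cdot>\<^sub>m 1\<^sub>m N + P * R) = c ^ N * det (c \<cdot>\<^sub>m 1\<^sub>m r + R * P)"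
proof -
  define M where "M = four_block_mat (c \<cdot>\<^sub>m 1\<^sub>m N) (- P) R (1\<^sub>m r)"
  define L1 where "L1 = four_block_mat (1\<^sub>m N) P (0\<^sub>m r N) (c \<cdot>\<^sub>m 1\<^sub>m r)"
  define L2 where "L2 = four_block_mat (1\<^sub>m N) (0\<^sub>m N r) (- R) (c \<cdot>\<^sub>m 1\<^sub>m r)"
  have M: "M \<in> carrier_mat (N + r) (N + r)"
    and L1: "L1 \<in> carrier_mat (N + r) (N + r)" and L2: "L2 \<in> carrier_mat (N + r) (N + r)"
    unfolding M_def L1_def L2_def using P R by auto
  have "det L1 = c ^ r" "det L2 = c ^ r"
    unfolding L1_def L2_def using P R
    by (simp_all add: det_four_block_mat_lower_left_zero[where n = N and m = r]
        det_four_block_mat_upper_right_zero[where n = N and m = r])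
  then have "det (L1 * M) = det (L2 * M)"
    using det_mult[OF L1 M] det_mult[OF L2 M] by simp
  moreover have "L1 * M = four_block_mat (c \<cdot>\<^sub>m 1\<^sub>m N + P * R) (0\<^sub>m N r) (c \<cdot>\<^sub>m R) (c \<cdot>\<^sub>m 1\<^sub>m r)"
    unfolding L1_def M_def using P R
    by (subst mult_four_block_mat[of _ N N _ r _ r _ _ N _ r]) auto
  moreover have "L2 * M = four_block_mat (c \<cdot>\<^sub>m 1\<^sub>m N) (- P) (0\<^sub>m r N) (c \<cdot>\<^sub>m 1\<^sub>m r + R * P)"
    unfolding L2_def M_def using P R
    by (subst mult_four_block_mat[of _ N N _ r _ r _ _ N _ r]) auto
  ultimately show ?thesis
    using P R
    by (simp add: det_four_block_mat_lower_left_zero[where n = N and m = r]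
        det_four_block_mat_upper_right_zero[where n = N and m = r] mult.commute)
qed

interpretation const_poly_hom: comm_ring_hom "\<lambda>a::'a::comm_ring_1. [:a:]"
  by unfold_locales (simp_all add: one_pCons)

lemma char_poly_one_minus_mult_commute:
  fixes P R :: "'a::idom mat"
  assumes P: "P \<in> carrier_mat N r" and R: "R \<in> carrier_mat r N"
  shows "[:-1, 1:] ^ r * char_poly (1\<^sub>m N - P * R) = [:-1, 1:] ^ N * char_poly (1\<^sub>m r - R * P)"
proof -
  have char_poly_matrix_eq: "char_poly_matrix (1\<^sub>m n - A) = [:-1, 1:] \<cdot>\<^sub>m 1\<^sub>m n + map_mat (\<lambda>a. [:a:]) A"
    if "A \<in> carrier_mat n n" for n and A :: "'a mat"
    using that by (intro eq_matI) (auto simp: char_poly_matrix_def poly_eq_iff coeff_pCons split: nat.split)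
  show ?thesis
    using P R det_sylvester[of "map_mat (\<lambda>a. [:a:]) P" N r "map_mat (\<lambda>a. [:a:]) R" "[:-1, 1:]"]
    by (simp add: char_poly_def char_poly_matrix_eq const_poly_hom.mat_hom_mult)
qed

lemma cospectral_if_char_poly_eq:
  assumes A: "A \<in> carrier_mat n n" and C: "C \<in> carrier_mat n n"
    and eq: "char_poly A = char_poly C"
  shows "cospectral A C"
proof -
  have "char_poly (map_mat complex_of_real A) = char_poly (map_mat complex_of_real C)"
    by (simp add: of_real_hom.char_poly_hom[OF A] of_real_hom.char_poly_hom[OF C] eq)
  then show ?thesis
    using A C by (simp add: cospectral_def)
qed

definition selection_mat :: "nat \<Rightarrow> nat \<Rightarrow> (nat \<Rightarrow> nat) \<Rightarrow> (nat \<Rightarrow> 'a::zero) \<Rightarrow> 'a mat" where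
  "selection_mat N r \<sigma> w = mat N r (\<lambda>(i, l). if \<sigma> i = l then w i else 0)"

lemma selection_mat_carrier [simp]: "selection_mat N r \<sigma> w \<in> carrier_mat N r"
  by (simp add: selection_mat_def)

lemma selection_mat_dim [simp]:
  "dim_row (selection_mat N r \<sigma> w) = N" "dim_col (selection_mat N r \<sigma> w) = r"
  by (simp_all add: selection_mat_def)

lemma selection_mat_index:
  "i < N \<Longrightarrow> l < r \<Longrightarrow> selection_mat N r \<sigma> w $$ (i, l) = (if \<sigma> i = l then w i else 0)"
  by (simp add: selection_mat_def)

lemma selection_mat_mult_index:
  fixes M :: "'a::comm_semiring_1 mat"
  assumes "M \<in> carrier_mat r nc" "i < N" "\<sigma> i < r" "j < nc"
  shows "(selection_mat N r \<sigma> w * M) $$ (i, j) = w i * M $$ (\<sigma> i, j)"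
proof -
  have "(selection_mat N r \<sigma> w * M) $$ (i, j) = (\<Sum>l\<in>{0..<r}. selection_mat N r \<sigma> w $$ (i, l) * M $$ (l, j))"
    using assms by (simp add: scalar_prod_def)
  also have "\<dots> = (\<Sum>l\<in>{0..<r}. if l = \<sigma> i then w i * M $$ (l, j) else 0)"
    using assms by (intro sum.cong) (auto simp: selection_mat_index)
  also have "\<dots> = w i * M $$ (\<sigma> i, j)"
    using assms by simp
  finally show ?thesis .
qed

lemma selection_mat_conjugate_index:
  fixes M :: "'a::comm_semiring_1 mat"
  assumes "M \<in> carrier_mat r r" "i < N" "j < N" "\<sigma> i < r" "\<sigma> j < r"
  shows "(selection_mat N r \<sigma> w * M * transpose_mat (selection_mat N r \<sigma> w)) $$ (i, j)
    = w i * M $$ (\<sigma> i, \<sigma> j) * w j"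
proof -
  let ?S = "selection_mat N r \<sigma> w"
  have "(?S * M * transpose_mat ?S) $$ (i, j) = (\<Sum>l\<in>{0..<r}. (?S * M) $$ (i, l) * ?S $$ (j, l))"
    using assms by (simp add: scalar_prod_def)
  also have "\<dots> = (\<Sum>l\<in>{0..<r}. if l = \<sigma> j then w i * M $$ (\<sigma> i, l) * w j else 0)"
    using assms by (intro sum.cong) (auto simp: selection_mat_index selection_mat_mult_index simp del: index_mult_mat)
  also have "\<dots> = w i * M $$ (\<sigma> i, \<sigma> j) * w j"
    using assms by simp
  finally show ?thesis .
qed

lemma selection_mat_orthonormal:
  fixes w :: "nat \<Rightarrow> 'a::comm_semiring_1"
  assumes "\<And>l. l < r \<Longrightarrow> (\<Sum>i<N. if \<sigma> i = l then w i * w i else 0) = 1"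
  shows "transpose_mat (selection_mat N r \<sigma> w) * selection_mat N r \<sigma> w = 1\<^sub>m r"
proof (rule eq_matI)
  fix l l' assume ll': "l < dim_row (1\<^sub>m r)" "l' < dim_col (1\<^sub>m r)"
  then have "(transpose_mat (selection_mat N r \<sigma> w) * selection_mat N r \<sigma> w) $$ (l, l')
      = (if l = l' then (\<Sum>i<N. if \<sigma> i = l then w i * w i else 0) else 0)"
    by (auto simp: scalar_prod_def selection_mat_index lessThan_atLeast0 intro!: sum.cong sum.neutral)
  then show "(transpose_mat (selection_mat N r \<sigma> w) * selection_mat N r \<sigma> w) $$ (l, l') = 1\<^sub>m r $$ (l, l')"
    using assms[of l] ll' by (cases "l = l'") auto
qed auto

definition norm_adjacency :: "real mat \<Rightarrow> real mat" where
  "norm_adjacency M = mat (dim_row M) (dim_row M)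
     (\<lambda>(i, j). inverse (sqrt (row_sum M i)) * M $$ (i, j) * inverse (sqrt (row_sum M j)))"

lemma norm_adjacency_carrier: "M \<in> carrier_mat n n \<Longrightarrow> norm_adjacency M \<in> carrier_mat n n"
  by (simp add: norm_adjacency_def)

lemma norm_laplacian_eq_one_minus_adjacency:
  "norm_laplacian M = 1\<^sub>m (dim_row M) - norm_adjacency M"
  by (rule eq_matI) (auto simp: norm_laplacian_def norm_adjacency_def)

definition bipartite_mat :: "'a::zero mat \<Rightarrow> 'a mat" where
  "bipartite_mat B = four_block_mat (0\<^sub>m (dim_row B) (dim_row B)) B
     (transpose_mat B) (0\<^sub>m (dim_col B) (dim_col B))"

lemma bipartite_mat_carrier: "B \<in> carrier_mat p q \<Longrightarrow> bipartite_mat B \<in> carrier_mat (p + q) (p + q)"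
  by (auto simp: bipartite_mat_def)

lemma bipartite_mat_index:
  assumes "B \<in> carrier_mat p q" "v < p + q" "v' < p + q"
  shows "bipartite_mat B $$ (v, v') =
    (if v < p \<and> \<not> v' < p then B $$ (v, v' - p)
     else if \<not> v < p \<and> v' < p then B $$ (v', v - p) else 0)"
  using assms by (auto simp: bipartite_mat_def)

lemma row_sum_bipartite_mat:
  assumes "B \<in> carrier_mat p q" "v < p + q"
  shows "row_sum (bipartite_mat B) v = (\<Sum>a<p. bipartite_mat B $$ (v, a)) + (\<Sum>b<q. bipartite_mat B $$ (v, p + b))"
  using assms bipartite_mat_carrier[OF assms(1)] by (simp add: row_sum_def sum_lessThan_add)

definition F_vertex :: "nat \<Rightarrow> nat \<Rightarrow> nat \<Rightarrow> nat \<Rightarrow> nat" where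
  "F_vertex p q k i = (case F_idx p q k i of Inl a \<Rightarrow> a | Inr b \<Rightarrow> p + b)"

lemma F_idx_less:
  assumes "0 < q" "q \<le> p"
  shows "case F_idx p q k i of Inl a \<Rightarrow> a < p | Inr b \<Rightarrow> b < q"
  using assms by (auto simp: F_idx_def)

lemma F_vertex_less:
  assumes "0 < q" "q \<le> p"
  shows "F_vertex p q k i < p + q"
  using F_idx_less[OF assms, of k i] by (auto simp: F_vertex_def split: sum.splits)

lemma F_mat_carrier: "F_mat n p q B k \<in> carrier_mat (k * q + n div k * p) (k * q + n div k * p)"
  by (simp add: F_mat_def)

lemma F_mat_index:
  assumes B: "B \<in> carrier_mat p q" and "0 < q" "q \<le> p"
    and "i < k * q + n div k * p" "j < k * q + n div k * p"
  shows "F_mat n p q B k $$ (i, j) = bipartite_mat B $$ (F_vertex p q k i, F_vertex p q k j)"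
  using assms F_idx_less[OF assms(2,3), of k i] F_idx_less[OF assms(2,3), of k j]
  by (cases "F_idx p q k i"; cases "F_idx p q k j")
    (simp_all add: F_mat_def F_vertex_def bipartite_mat_index[OF B])

lemma sum_F_vertex:
  fixes f :: "nat \<Rightarrow> 'a::comm_semiring_1"
  assumes "0 < m"
  shows "(\<Sum>i<k * q + m * p. f (F_vertex p q k i))
    = of_nat m * (\<Sum>a<p. f a) + of_nat k * (\<Sum>b<q. f (p + b))"
proof -
  have "k * q + m * p = p + (k * q + (m - 1) * p)"
    using assms by (cases m) auto
  then have "(\<Sum>i<k * q + m * p. f (F_vertex p q k i))
      = (\<Sum>i<p. f (F_vertex p q k i)) + ((\<Sum>i<k * q. f (F_vertex p q k (p + i)))
        + (\<Sum>i<(m - 1) * p. f (F_vertex p q k (p + (k * q + i)))))"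
    by (simp only: sum_lessThan_add)
  also have "\<dots> = (\<Sum>a<p. f a) + ((\<Sum>i<k * q. f (p + i mod q)) + (\<Sum>i<(m - 1) * p. f (i mod p)))"
    by (intro arg_cong2[where f = "(+)"] sum.cong) (auto simp: F_vertex_def F_idx_def)
  also have "\<dots> = (\<Sum>a<p. f a) + (of_nat k * (\<Sum>b<q. f (p + b)) + of_nat (m - 1) * (\<Sum>a<p. f a))"
    using sum_lessThan_mult_mod[where g = "\<lambda>b. f (p + b)" and t = k and q = q]
      sum_lessThan_mult_mod[where g = f and t = "m - 1" and q = p]
    by simp
  also have "\<dots> = of_nat m * (\<Sum>a<p. f a) + of_nat k * (\<Sum>b<q. f (p + b))"
    using assms by (cases m) (simp_all add: algebra_simps)
  finally show ?thesis .
qed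

text \<open>A row of B has n/k copies in F_k and a column has k copies (see sum_F_vertex); weighting
  every copy by the inverse square root of its number of copies makes the columns of F_selection
  orthonormal.\<close>

definition F_weight :: "nat \<Rightarrow> nat \<Rightarrow> nat \<Rightarrow> nat \<Rightarrow> nat \<Rightarrow> real" where
  "F_weight n p q k i = (if i < k * q + n div k * p
     then inverse (sqrt (real (if F_vertex p q k i < p then n div k else k))) else 0)"

definition F_selection :: "nat \<Rightarrow> nat \<Rightarrow> nat \<Rightarrow> nat \<Rightarrow> real mat" where
  "F_selection n p q k = selection_mat (n * p + q) (p + q) (F_vertex p q k) (F_weight n p q k)"

context
  fixes n p q k :: nat and B :: "real mat"
  assumes n_pos: "0 < n" and q_pos: "0 < q" and q_le_p: "q \<le> p" and B: "B \<in> carrier_mat p q"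
    and k_pos: "0 < k" and k_dvd: "k dvd n"
begin

lemma n_div_k_pos: "0 < n div k"
  using n_pos k_dvd by (metis dvd_div_mult_self mult_0 neq0_conv)

lemma F_pad_size: "k * q + n div k * p + ((n - n div k) * p + q - k * q) = n * p + q"
proof -
  define m where "m = n div k"
  have n: "n = m * k" and m_pos: "0 < m"
    using k_dvd n_div_k_pos unfolding m_def by simp_all
  have "(k - 1) * q \<le> (k - 1) * p"
    using q_le_p by simp
  also have "\<dots> \<le> m * ((k - 1) * p)"
    using m_pos by simp
  also have "\<dots> = (n - m) * p"
    unfolding n by (simp add: algebra_simps diff_mult_distrib2)
  finally have "k * q \<le> (n - m) * p + q"
    using k_pos by (cases k) auto
  moreover have "m * p \<le> n * p"
    unfolding n using k_pos by simp
  moreover have "(n - m) * p = n * p - m * p"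
    by (simp add: diff_mult_distrib)
  ultimately show ?thesis
    unfolding m_def[symmetric] by linarith
qed

lemma F_pad_carrier: "F_pad n p q B k \<in> carrier_mat (n * p + q) (n * p + q)"
  using F_pad_size by (auto simp: F_pad_def F_mat_def Let_def)

lemma F_pad_index:
  assumes "i < n * p + q" "j < n * p + q"
  shows "F_pad n p q B k $$ (i, j) = (if i < k * q + n div k * p \<and> j < k * q + n div k * p
    then bipartite_mat B $$ (F_vertex p q k i, F_vertex p q k j) else 0)"
proof -
  let ?N = "k * q + n div k * p" and ?m = "(n - n div k) * p + q - k * q"
  have "i < ?N + ?m" "j < ?N + ?m"
    using assms F_pad_size by simp_all
  then show ?thesis
    using F_mat_carrier[of n p q B k] F_mat_index[OF B q_pos q_le_p]
    unfolding F_pad_def Let_def by (subst index_mat_four_block) auto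
qed

lemma sum_F_pad_dim_truncate:
  fixes g :: "nat \<Rightarrow> 'a::comm_monoid_add"
  assumes "\<And>i. k * q + n div k * p \<le> i \<Longrightarrow> i < n * p + q \<Longrightarrow> g i = 0"
  shows "(\<Sum>i<n * p + q. g i) = (\<Sum>i<k * q + n div k * p. g i)"
  unfolding F_pad_size[symmetric] sum_lessThan_add using F_pad_size by (simp add: assms)

lemma row_sum_F_pad:
  assumes i: "i < k * q + n div k * p"
  shows "row_sum (F_pad n p q B k) i
    = real (if F_vertex p q k i < p then k else n div k) * row_sum (bipartite_mat B) (F_vertex p q k i)"
proof -
  let ?v = "F_vertex p q k i" and ?Bip = "bipartite_mat B"
  have v: "?v < p + q"
    by (rule F_vertex_less[OF q_pos q_le_p])
  have "row_sum (F_pad n p q B k) i = (\<Sum>j<n * p + q. F_pad n p q B k $$ (i, j))"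
    using F_pad_carrier by (simp add: row_sum_def)
  also have "\<dots> = (\<Sum>j<k * q + n div k * p. ?Bip $$ (?v, F_vertex p q k j))"
    using F_pad_size i by (subst sum_F_pad_dim_truncate) (auto simp: F_pad_index)
  also have "\<dots> = real (n div k) * (\<Sum>a<p. ?Bip $$ (?v, a)) + real k * (\<Sum>b<q. ?Bip $$ (?v, p + b))"
    using n_div_k_pos by (rule sum_F_vertex)
  also have "\<dots> = real (if ?v < p then k else n div k) * row_sum ?Bip ?v"
    using v by (auto simp: row_sum_bipartite_mat[OF B] bipartite_mat_index[OF B])
  finally show ?thesis .
qed

lemma norm_adjacency_F_pad:
  "norm_adjacency (F_pad n p q B k)
    = F_selection n p q k * norm_adjacency (bipartite_mat B) * transpose_mat (F_selection n p q k)"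
proof (rule eq_matI)
  let ?N = "k * q + n div k * p" and ?A = "norm_adjacency (bipartite_mat B)"
  have A: "?A \<in> carrier_mat (p + q) (p + q)"
    by (rule norm_adjacency_carrier[OF bipartite_mat_carrier[OF B]])
  fix i j assume "i < dim_row (F_selection n p q k * ?A * transpose_mat (F_selection n p q k))"
    "j < dim_col (F_selection n p q k * ?A * transpose_mat (F_selection n p q k))"
  then have ij: "i < n * p + q" "j < n * p + q"
    by (simp_all add: F_selection_def)
  let ?v = "F_vertex p q k i" and ?v' = "F_vertex p q k j"
  have v: "?v < p + q" "?v' < p + q"
    using F_vertex_less[OF q_pos q_le_p] by auto
  have "(F_selection n p q k * ?A * transpose_mat (F_selection n p q k)) $$ (i, j)
    = F_weight n p q k i * ?A $$ (?v, ?v') * F_weight n p q k j"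
    unfolding F_selection_def using A ij v by (rule selection_mat_conjugate_index)
  also have "\<dots> = norm_adjacency (F_pad n p q B k) $$ (i, j)"
    using ij v F_pad_carrier bipartite_mat_carrier[OF B]
    by (cases "?v < p"; cases "?v' < p")
      (auto simp: F_weight_def norm_adjacency_def F_pad_index row_sum_F_pad bipartite_mat_index[OF B]
        real_sqrt_mult)
  finally show "norm_adjacency (F_pad n p q B k) $$ (i, j)
    = (F_selection n p q k * ?A * transpose_mat (F_selection n p q k)) $$ (i, j)" ..
qed (use F_pad_carrier in \<open>simp_all add: norm_adjacency_def F_selection_def\<close>)

lemma F_selection_orthonormal:
  "transpose_mat (F_selection n p q k) * F_selection n p q k = 1\<^sub>m (p + q)"
  unfolding F_selection_def
proof (rule selection_mat_orthonormal)
  fix l assume l: "l < p + q"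
  define f where "f v = (if v = l then inverse (real (if v < p then n div k else k)) else 0)" for v
  have "(\<Sum>i<n * p + q. if F_vertex p q k i = l then F_weight n p q k i * F_weight n p q k i else 0)
      = (\<Sum>i<k * q + n div k * p. f (F_vertex p q k i))" (is "?S = _")
    by (subst sum_F_pad_dim_truncate)
      (auto simp: F_weight_def f_def intro!: sum.cong simp flip: inverse_mult_distrib)
  also have "\<dots> = real (n div k) * (\<Sum>a<p. f a) + real k * (\<Sum>b<q. f (p + b))"
    using n_div_k_pos by (rule sum_F_vertex)
  also have "\<dots> = 1"
  proof (cases "l < p")
    case False
    then have "(\<Sum>b<q. f (p + b)) = (\<Sum>b<q. if b = l - p then inverse (real k) else 0)"
      by (intro sum.cong) (auto simp: f_def)
    then show ?thesis
      using False l k_pos by (simp add: f_def)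
  qed (use n_div_k_pos in \<open>simp add: f_def\<close>)
  finally show "?S = 1" .
qed

lemma char_poly_norm_laplacian_F_pad:
  "[:-1, 1:] ^ (p + q) * char_poly (norm_laplacian (F_pad n p q B k))
    = [:-1, 1:] ^ (n * p + q) * char_poly (norm_laplacian (bipartite_mat B))"
proof -
  let ?P = "F_selection n p q k" and ?A = "norm_adjacency (bipartite_mat B)"
  have P: "?P \<in> carrier_mat (n * p + q) (p + q)"
    by (simp add: F_selection_def)
  have A: "?A \<in> carrier_mat (p + q) (p + q)"
    by (rule norm_adjacency_carrier[OF bipartite_mat_carrier[OF B]])
  have R: "?A * transpose_mat ?P \<in> carrier_mat (p + q) (n * p + q)"
    using A P by simp
  have "norm_laplacian (F_pad n p q B k) = 1\<^sub>m (n * p + q) - ?P * (?A * transpose_mat ?P)"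
    using F_pad_carrier A P
    by (simp add: norm_laplacian_eq_one_minus_adjacency norm_adjacency_F_pad assoc_mult_mat[OF P A])
  moreover have "?A * transpose_mat ?P * ?P = ?A"
    using A P by (simp add: assoc_mult_mat[OF A] F_selection_orthonormal)
  moreover have "norm_laplacian (bipartite_mat B) = 1\<^sub>m (p + q) - ?A"
    using bipartite_mat_carrier[OF B] by (simp add: norm_laplacian_eq_one_minus_adjacency)
  ultimately show ?thesis
    using char_poly_one_minus_mult_commute[OF P R] by simp
qed

end

theorem theorem3p6:
  fixes n p q :: nat and B :: "real mat"
  assumes "0 < n" and "0 < q" and "q \<le> p"
    and "B \<in> carrier_mat p q"
    and "\<forall>i<p. \<forall>j<q. 0 \<le> B $$ (i, j)"
  shows "\<forall>k1 k2. 0 < k1 \<and> k1 dvd n \<and> 0 < k2 \<and> k2 dvd n \<longrightarrow>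
           cospectral (norm_laplacian (F_pad n p q B k1)) (norm_laplacian (F_pad n p q B k2))"
proof (intro allI impI)
  fix k1 k2 assume k: "0 < k1 \<and> k1 dvd n \<and> 0 < k2 \<and> k2 dvd n"
  have "[:-1, 1:] ^ (p + q) * char_poly (norm_laplacian (F_pad n p q B k1))
      = [:-1, 1:] ^ (p + q) * char_poly (norm_laplacian (F_pad n p q B k2))"
    using k char_poly_norm_laplacian_F_pad[OF assms(1-4)] by simp
  then have "char_poly (norm_laplacian (F_pad n p q B k1)) = char_poly (norm_laplacian (F_pad n p q B k2))"
    by simp
  moreover have "norm_laplacian (F_pad n p q B k) \<in> carrier_mat (n * p + q) (n * p + q)"
    if "0 < k" "k dvd n" for k
    using F_pad_carrier[OF assms(1-4) that] by (simp add: norm_laplacian_def)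
  ultimately show "cospectral (norm_laplacian (F_pad n p q B k1)) (norm_laplacian (F_pad n p q B k2))"
    using k by (intro cospectral_if_char_poly_eq) auto
qed

end
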